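(* Let $N\ge1$, let the parameter space $\Theta$ of the correlated Bernoulli random graph model be nondegenerate, let $g:\Theta\to\mathbb{R}$, and let $S:\mathcal{X}\to\mathbb{R}$ be an unbiased estimator of $g(\theta)$ (i.e. $\mathbb{E}_\theta(S)=g(\theta)$ for all $\theta\in\Theta$). Then a statistic $T:\mathcal{X}\to\mathbb{R}$ is an unbiased estimator of $g(\theta)$ if and only if $\overline{T}=\overline{S}$. In particular, $\overline{S}$ is an unbiased estimator of $g(\theta)$.
   Context: Correlated Bernoulli random graph model: fix a positive integer $N$ and let $\mathcal{R}=\{(p_1,\dots,p_N,\varrho_1,\dots,\varrho_N): p_i,\varrho_i\in[0,1]\}$. A parameter space is any subset $\Theta\subseteq\mathcal{R}$. For $\theta\in\Theta$, the random vectors $X,Y\in\{0,1\}^N$ are such that the pairs $(X_i,Y_i)$ are independent across $i$; $X_i,Y_i$ are each marginally Bernoulli$(p_i)$ with Pearson correlation $\varrho_i$ (so $\mathbb{P}(X_i=Y_i=1)=p_i^2+\varrho_ip_i(1-p_i)$, $\mathbb{P}(X_i=Y_i=0)=(1-p_i)^2+\varrho_ip_i(1-p_i)$, $\mathbb{P}(X_i=1,Y_i=0)=\mathbb{P}(X_i=0,Y_i=1)=(1-\varrho_i)p_i(1-p_i)$). Sample space $\mathcal{X}=\{(x,y):x,y\in\{0,1\}^N\}$. Let $\mathcal{R}^o=\{(p_1,\dots,p_N,0,\dots,0):p_i\in\mathbb{R}\}$; $\Theta$ is nondegenerate if $\Theta\cap\mathcal{R}^o$ has an interior point relative to $\mathcal{R}^o$.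 The disagreement vector $\mathcal{H}:\mathcal{X}\to\{0,\star,1\}^N$ has $i$th component $1$ if $x_i=y_i=1$, $0$ if $x_i=y_i=0$, $\star$ if $x_i\neq y_i$; for $h\in\{0,\star,1\}^N$ the disagreement class is $\mathcal{X}_h=\mathcal{H}^{-1}(h)$. For a statistic $S:\mathcal{X}\to\mathbb{R}$, its balanced variant $\overline{S}:\mathcal{X}\to\mathbb{R}$ is defined by $\overline{S}(x,y)=\frac{1}{|\mathcal{X}_h|}\sum_{(x',y')\in\mathcal{X}_h}S(x',y')$ where $h=\mathcal{H}(x,y)$. *)

theory Defs
  imports Complex_Main
begin

text \<open>Index set {1..N} is modelled by a finite type 'n (so N = CARD('n) \<ge> 1).
  A sample point is (x, y) with x, y :: 'n \<Rightarrow> bool (True = 1, False = 0).\<close>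

type_synonym 'n param = "('n \<Rightarrow> real) \<times> ('n \<Rightarrow> real)"
type_synonym 'n sample = "('n \<Rightarrow> bool) \<times> ('n \<Rightarrow> bool)"

definition param_space_R :: "'n param set" where
  "param_space_R = {(p, r). \<forall>i. 0 \<le> p i \<and> p i \<le> 1 \<and> 0 \<le> r i \<and> r i \<le> 1}"

text \<open>Nondegenerate: Theta intersected with R^o = {(p,0) : p \<in> R^N} has a relative interior point.\<close>
definition nondegenerate :: "'n param set \<Rightarrow> bool" where
  "nondegenerate \<Theta> \<longleftrightarrow>
     (\<exists>p0 (e::real). e > 0 \<and>
        (\<forall>p. (\<forall>i. \<bar>p i - p0 i\<bar> < e) \<longrightarrow> (p, (\<lambda>_. 0)) \<in> \<Theta>))"

definition cell_prob :: "real \<Rightarrow> real \<Rightarrow> bool \<Rightarrow> bool \<Rightarrow> real" where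
  "cell_prob p r a b =
     (if a \<and> b then p\<^sup>2 + r * p * (1 - p)
      else if \<not> a \<and> \<not> b then (1 - p)\<^sup>2 + r * p * (1 - p)
      else (1 - r) * p * (1 - p))"

definition prob_pt :: "'n::finite param \<Rightarrow> 'n sample \<Rightarrow> real" where
  "prob_pt \<theta> z = (\<Prod>i\<in>UNIV. cell_prob (fst \<theta> i) (snd \<theta> i) (fst z i) (snd z i))"

definition expect :: "'n::finite param \<Rightarrow> ('n sample \<Rightarrow> real) \<Rightarrow> real" where
  "expect \<theta> S = (\<Sum>z\<in>UNIV. prob_pt \<theta> z * S z)"

definition unbiased :: "'n::finite param set \<Rightarrow> ('n param \<Rightarrow> real) \<Rightarrow> ('n sample \<Rightarrow> real) \<Rightarrow> bool" where
  "unbiased \<Theta> g S \<longleftrightarrow> (\<forall>\<theta>\<in>\<Theta>. expect \<theta> S = g \<theta>)"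

datatype dis = D0 | DStar | D1

definition disagreement :: "'n sample \<Rightarrow> ('n \<Rightarrow> dis)" where
  "disagreement z = (\<lambda>i. if fst z i \<and> snd z i then D1
                         else if \<not> fst z i \<and> \<not> snd z i then D0 else DStar)"

definition dis_class :: "('n \<Rightarrow> dis) \<Rightarrow> 'n sample set" where
  "dis_class h = {z. disagreement z = h}"

definition balanced :: "('n::finite sample \<Rightarrow> real) \<Rightarrow> 'n sample \<Rightarrow> real" where
  "balanced S z = (\<Sum>z'\<in>dis_class (disagreement z). S z') / real (card (dis_class (disagreement z)))"

end

theory Submission
  imports Defs "HOL-Computational_Algebra.Polynomial" "HOL-Library.FuncSet"
begin

text \<open>The probability of a sample point depends only on its disagreement vector h, so
  E(T) is a linear combination of the class sums of T, with weights that are products over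
  the coordinates of one-cell probabilities. Since the balanced variant of T is constant on
  each class with the same class sum, balanced T = balanced S says exactly that T and S have
  the same class sums, which gives the easy direction. Conversely, on the uncorrelated slice
  \<rho> = 0 the one-cell weights (1 - p)^2, p(1 - p), p^2 are linearly independent
  polynomials in p, hence their tensor products are linearly independent on any open box;
  nondegeneracy supplies such a box, so two unbiased estimators have the same class sums.\<close>

lemma poly_eq_0_if_vanishes_on_interval:
  fixes q :: "real poly"
  assumes "a < b" and "\<And>x. x \<in> {a<..<b} \<Longrightarrow> poly q x = 0"
  shows "q = 0"
proof (rule ccontr)
  assume "q \<noteq> 0"
  then have "finite {x. poly q x = 0}" by (rule poly_roots_finite)
  moreover have "{a<..<b} \<subseteq> {x. poly q x = 0}" using assms(2) by blast
  ultimately show False using \<open>a < b\<close> infinite_Ioo finite_subset by metis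
qed

lemma UNIV_dis: "UNIV = {D0, DStar, D1}"
  using dis.exhaust by auto

instance dis :: finite
  by standard (simp add: UNIV_dis)

definition cell_weight :: "real \<Rightarrow> real \<Rightarrow> dis \<Rightarrow> real" where
  "cell_weight p r v = (case v of
       D1 \<Rightarrow> p\<^sup>2 + r * p * (1 - p)
     | D0 \<Rightarrow> (1 - p)\<^sup>2 + r * p * (1 - p)
     | DStar \<Rightarrow> (1 - r) * p * (1 - p))"

lemma uncorrelated_cell_weights_independent:
  assumes "e > 0"
    and vanish: "\<And>x. \<bar>x - x0\<bar> < e \<Longrightarrow> (\<Sum>v\<in>UNIV. a v * cell_weight x 0 v) = 0"
  shows "a v = 0"
proof -
  \<comment> \<open>\<open>?q\<close> is \<open>\<lambda>x. \<Sum>v. a v * cell_weight x 0 v\<close> written in the monomial basis.\<close>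
  let ?q = "[:a D0, a DStar - 2 * a D0, a D0 - a DStar + a D1:]"
  have q_vanishes: "poly ?q x = 0" if "x \<in> {x0 - e<..<x0 + e}" for x
  proof -
    have "\<bar>x - x0\<bar> < e" using that by auto
    from vanish[OF this] show ?thesis
      by (simp add: UNIV_dis cell_weight_def algebra_simps power2_eq_square)
  qed
  have "?q = 0"
    using \<open>e > 0\<close> by (intro poly_eq_0_if_vanishes_on_interval[OF _ q_vanishes]) auto
  then show ?thesis by (cases v) auto
qed

lemma tensor_products_independent_on_box:
  fixes f :: "'v \<Rightarrow> real \<Rightarrow> real" and c :: "('i \<Rightarrow> 'v) \<Rightarrow> real"
  assumes indep: "\<And>a t. (\<And>x. \<bar>x - t\<bar> < e \<Longrightarrow> (\<Sum>v\<in>V. a v * f v x) = 0) \<Longrightarrow> \<forall>v\<in>V. a v = 0"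
    and "finite I"
    and "\<And>p. \<forall>i\<in>I. \<bar>p i - p0 i\<bar> < e \<Longrightarrow> (\<Sum>h\<in>PiE I (\<lambda>_. V). c h * (\<Prod>i\<in>I. f (h i) (p i))) = 0"
  shows "\<forall>h\<in>PiE I (\<lambda>_. V). c h = 0"
  using \<open>finite I\<close> assms(3)
proof (induction I arbitrary: c rule: finite_induct)
  case empty
  then show ?case by simp
next
  case (insert j I)
  define A where "A v p = (\<Sum>h\<in>PiE I (\<lambda>_. V). c (h(j := v)) * (\<Prod>i\<in>I. f (h i) (p i)))" for v p
  have split_off_j: "(\<Sum>h\<in>PiE (insert j I) (\<lambda>_. V). c h * (\<Prod>i\<in>insert j I. f (h i) (p i)))
      = (\<Sum>v\<in>V. A v p * f v (p j))" for p
  proof -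
    have factor: "(\<Prod>i\<in>insert j I. f ((h(j := v)) i) (p i)) = f v (p j) * (\<Prod>i\<in>I. f (h i) (p i))"
      for h v
    proof -
      have "(\<Prod>i\<in>I. f ((h(j := v)) i) (p i)) = (\<Prod>i\<in>I. f (h i) (p i))"
        using insert.hyps(2) by (intro prod.cong) auto
      then show ?thesis using insert.hyps by simp
    qed
    have "(\<Sum>h\<in>PiE (insert j I) (\<lambda>_. V). c h * (\<Prod>i\<in>insert j I. f (h i) (p i)))
        = (\<Sum>(v, h)\<in>V \<times> PiE I (\<lambda>_. V). c (h(j := v)) * (\<Prod>i\<in>insert j I. f ((h(j := v)) i) (p i)))"
      unfolding PiE_insert_eq by (subst sum.reindex[OF inj_combinator[OF insert.hyps(2)]]) (simp add: case_prod_beta')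
    also have "\<dots> = (\<Sum>v\<in>V. \<Sum>h\<in>PiE I (\<lambda>_. V). c (h(j := v)) * (\<Prod>i\<in>insert j I. f ((h(j := v)) i) (p i)))"
      by (rule sum.cartesian_product[symmetric])
    also have "\<dots> = (\<Sum>v\<in>V. A v p * f v (p j))"
      unfolding A_def factor by (simp add: sum_distrib_left mult_ac)
    finally show ?thesis .
  qed
  have A_zero: "A v p = 0" if p: "\<forall>i\<in>I. \<bar>p i - p0 i\<bar> < e" and "v \<in> V" for v p
  proof -
    have "(\<Sum>v\<in>V. A v p * f v x) = 0" if "\<bar>x - p0 j\<bar> < e" for x
    proof -
      have "A v (p(j := x)) = A v p" for v
        unfolding A_def using insert.hyps(2) by (intro sum.cong refl arg_cong2[where f = "(*)"] prod.cong) auto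
      moreover have "\<forall>i\<in>insert j I. \<bar>(p(j := x)) i - p0 i\<bar> < e" using p that by auto
      ultimately show ?thesis using insert.prems split_off_j[of "p(j := x)"] by simp
    qed
    then have "\<forall>v\<in>V. A v p = 0" by (rule indep)
    with \<open>v \<in> V\<close> show ?thesis by blast
  qed
  show ?case
  proof
    fix h assume h: "h \<in> PiE (insert j I) (\<lambda>_. V)"
    define v where "v = h j"
    have "v \<in> V" unfolding v_def using h by (rule PiE_mem) simp
    have "h(j := undefined) \<in> PiE I (\<lambda>_. V)" using insert.hyps(2) h by (rule fun_upd_in_PiE)
    moreover have "\<forall>h'\<in>PiE I (\<lambda>_. V). c (h'(j := v)) = 0"
      using A_zero[OF _ \<open>v \<in> V\<close>] unfolding A_def by (rule insert.IH)
    moreover have "h = (h(j := undefined))(j := v)" unfolding v_def by simp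
    ultimately show "c h = 0" by metis
  qed
qed

definition class_point_prob :: "'n::finite param \<Rightarrow> ('n \<Rightarrow> dis) \<Rightarrow> real" where
  "class_point_prob \<theta> h = (\<Prod>i\<in>UNIV. cell_weight (fst \<theta> i) (snd \<theta> i) (h i))"

definition class_sum :: "('n::finite sample \<Rightarrow> real) \<Rightarrow> ('n \<Rightarrow> dis) \<Rightarrow> real" where
  "class_sum T h = sum T (dis_class h)"

lemma prob_pt_eq_class_point_prob: "prob_pt \<theta> z = class_point_prob \<theta> (disagreement z)"
proof -
  have "cell_prob p r a b = cell_weight p r (if a \<and> b then D1 else if \<not> a \<and> \<not> b then D0 else DStar)"
    for p r a b
    by (cases a; cases b) (simp_all add: cell_prob_def cell_weight_def)
  then show ?thesis
    unfolding prob_pt_def class_point_prob_def disagreement_def by simp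
qed

lemma expect_eq_sum_class_sum: "expect \<theta> T = (\<Sum>h\<in>UNIV. class_point_prob \<theta> h * class_sum T h)"
proof -
  have "expect \<theta> T = (\<Sum>z\<in>UNIV. class_point_prob \<theta> (disagreement z) * T z)"
    unfolding expect_def prob_pt_eq_class_point_prob ..
  also have "\<dots> = (\<Sum>h\<in>UNIV. \<Sum>z\<in>{z\<in>UNIV. disagreement z = h}. class_point_prob \<theta> (disagreement z) * T z)"
    by (rule sum.group[symmetric]) auto
  also have "\<dots> = (\<Sum>h\<in>UNIV. class_point_prob \<theta> h * class_sum T h)"
    unfolding class_sum_def dis_class_def by (simp add: sum_distrib_left)
  finally show ?thesis .
qed

lemma dis_class_nonempty: "dis_class h \<noteq> {}"
proof -
  have "disagreement ((\<lambda>i. h i \<noteq> D0), (\<lambda>i. h i = D1)) = h"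
    by (rule ext, rename_tac i, case_tac "h i") (simp_all add: disagreement_def)
  then show ?thesis unfolding dis_class_def by blast
qed

lemma balanced_eq_iff_class_sum_eq:
  fixes T S :: "'n::finite sample \<Rightarrow> real"
  shows "balanced T = balanced S \<longleftrightarrow> class_sum T = class_sum S"
proof
  assume eq: "balanced T = balanced S"
  show "class_sum T = class_sum S"
  proof
    fix h :: "'n \<Rightarrow> dis"
    obtain z where z: "disagreement z = h" using dis_class_nonempty[of h] by (auto simp: dis_class_def)
    have "balanced T z = balanced S z" using eq by simp
    then show "class_sum T h = class_sum S h"
      using dis_class_nonempty[of h] unfolding balanced_def class_sum_def z by simp
  qed
qed (simp add: balanced_def class_sum_def fun_eq_iff)

lemma class_sum_balanced: "class_sum (balanced S) = class_sum S"
proof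
  fix h
  have "class_sum (balanced S) h = (\<Sum>z\<in>dis_class h. class_sum S h / card (dis_class h))"
    unfolding class_sum_def balanced_def by (intro sum.cong) (auto simp: dis_class_def)
  also have "\<dots> = class_sum S h" using dis_class_nonempty[of h] by simp
  finally show "class_sum (balanced S) h = class_sum S h" .
qed

lemma class_sum_eq_if_unbiased:
  assumes "nondegenerate \<Theta>" and "unbiased \<Theta> g S" and "unbiased \<Theta> g T"
  shows "class_sum T = class_sum S"
proof -
  obtain p0 and e :: real where "e > 0"
    and box: "\<And>p. \<forall>i. \<bar>p i - p0 i\<bar> < e \<Longrightarrow> (p, \<lambda>_. 0) \<in> \<Theta>"
    using assms(1) unfolding nondegenerate_def by blast
  let ?c = "\<lambda>h. class_sum T h - class_sum S h"
  have vanish: "(\<Sum>h\<in>PiE UNIV (\<lambda>_. UNIV). ?c h * (\<Prod>i\<in>UNIV. cell_weight (p i) 0 (h i))) = 0"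
    if "\<forall>i\<in>UNIV. \<bar>p i - p0 i\<bar> < e" for p
  proof -
    have "expect (p, \<lambda>_. 0) T = expect (p, \<lambda>_. 0) S"
      using assms(2,3) box that unfolding unbiased_def by simp
    then show ?thesis
      by (simp add: expect_eq_sum_class_sum class_point_prob_def left_diff_distrib sum_subtractf mult.commute)
  qed
  have indep: "\<forall>v\<in>UNIV. a v = 0"
    if "\<And>x. \<bar>x - t\<bar> < e \<Longrightarrow> (\<Sum>v\<in>UNIV. a v * cell_weight x 0 v) = 0" for a t
    using uncorrelated_cell_weights_independent[OF \<open>e > 0\<close> that] by blast
  have "\<forall>h\<in>PiE UNIV (\<lambda>_. UNIV). ?c h = 0"
    by (rule tensor_products_independent_on_box[OF indep finite vanish])
  then show ?thesis by (simp add: fun_eq_iff)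
qed

theorem theorem2:
  fixes \<Theta> :: "('n::finite) param set"
    and g :: "'n param \<Rightarrow> real"
    and S :: "'n sample \<Rightarrow> real"
  assumes "\<Theta> \<subseteq> param_space_R"
    and "nondegenerate \<Theta>"
    and "unbiased \<Theta> g S"
  shows "(\<forall>T :: 'n sample \<Rightarrow> real. unbiased \<Theta> g T \<longleftrightarrow> balanced T = balanced S)
         \<and> unbiased \<Theta> g (balanced S)"
proof -
  have "unbiased \<Theta> g T \<longleftrightarrow> balanced T = balanced S" for T
  proof
    assume "unbiased \<Theta> g T"
    with assms(2,3) have "class_sum T = class_sum S" by (rule class_sum_eq_if_unbiased)
    then show "balanced T = balanced S" by (simp only: balanced_eq_iff_class_sum_eq)
  next
    assume "balanced T = balanced S"
    then have "class_sum T = class_sum S" by (simp only: balanced_eq_iff_class_sum_eq)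
    with assms(3) show "unbiased \<Theta> g T" by (simp add: unbiased_def expect_eq_sum_class_sum)
  qed
  moreover have "balanced (balanced S) = balanced S"
    by (simp only: balanced_eq_iff_class_sum_eq class_sum_balanced)
  ultimately show ?thesis by blast
qed

end
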